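(* There exists an optimal adaptive batching policy $\pi^*$ that maximizes $V^{\pi}_1(s)$ over all adaptive batching policies simultaneously for all $s\in\mathcal{S}$. For every $h\in[H]$ and $s\in\mathcal{S}$ the optimal values satisfy $$V^*_h(s)=\max_{B\in[\ell_h]}\mathbb{E}_{I\sim\mathcal{I}_{h,B}(s)}\left[\mathfrak{Q}^*_h(s,B;I,V^*_{h+B})\right],$$ with $V^*_{H+1}\equiv 0$, where the expectation samples fresh lookahead information independently between time steps. Moreover, an optimal policy chooses batching horizons $B^*_h(s)\in\arg\max_{B\in[\ell_h]}\mathbb{E}_{I\sim\mathcal{I}_{h,B}(s)}[\mathfrak{Q}^*_h(s,B;I,V^*_{h+B})]$, and when starting a new batch at step $h$ in state $s$ with length $B^*_h=B^*_h(s)$ and lookahead $I=I_{h,B^*_h}(s)$ it is optimal to play a deterministic Markov policy $$\phi^{*,h}\in\arg\max_{\phi}\left\{\sum_{b=0}^{B^*_h-1}\mathfrak{R}_{h+b\mid h}(s,\phi,I)+V^*_{h+B^*_h}\big(\mathfrak{s}_{h+B^*_h\mid h}(s,\phi,I)\big)\right\}.$$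
   Context: Episodic tabular MDP with finite states $\mathcal{S}$, actions $\mathcal{A}$, horizon $H$, rewards in $[0,1]$ with distributions $\mathcal{R}_h(s,a)$ and transitions $P_h$, independent across time steps (arbitrarily correlated across state-actions within a step). Fix a lookahead range $\ell\ge1$ and let $\ell_h=\min\{\ell,H-h+1\}$, $[n]=\{1,\dots,n\}$. For $B\in[\ell_h]$, the $B$-step lookahead information $I_{h,B}(s)$ from state $s$ at step $h$ consists of the realized rewards and next states of all state-action pairs reachable from $s$ at steps $h,\dots,h+B-1$ (equivalently, the realized trajectories from $s$ under every deterministic Markov policy over those steps); its distribution, $\mathcal{I}_{h,B}(s)$, is obtained by sampling rewards/next states from the model independently across time steps. For a deterministic Markov policy $\phi$, $\mathfrak{R}_{t\mid h}(s,\phi,I)$ and $\mathfrak{s}_{t\mid h}(s,\phi,I)$ are the reward at step $t$ and the state at step $t$ when starting at $s_h=s$ and following $\phi$ under realization $I$. For $V\in\mathbb{R}^{\mathcal{S}}$, $\mathfrak{Q}^*_h(s,B;I,V)=\max_{\phi}\{\sum_{t=h}^{h+B-1}\mathfrak{R}_{t\mid h}(s,\phi,I)+V(\mathfrak{s}_{h+B\mid h}(s,\phi,I))\}$, the max being over deterministic Markov policies. An adaptive batching policy (ABP) $\pi$ is given by batching horizons $B^\pi_h(s)\in[\ell_h]$ and deterministic Markov policies $\phi^h(s,I;\pi)$: starting at $h=1$, at the start of a batch at step $h$ in state $s_h$ it picks $B_h=B^\pi_h(s_h)$, observes $I=I_{h,B_h}(s_h)$ (fresh, independent of the past), plays $\phi^h(s_h,I;\pi)$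 for $B_h$ steps, and starts the next batch at step $h+B_h$, until $H$ steps are played. $E^n_h$ denotes the event that a batch starts at step $h$. The value is $V^\pi_h(s)=\mathbb{E}[\sum_{t=h}^H R_t\mid s_h=s,E^n_h,\pi]$, and $V^*_1(s)=\max_{\pi}V^\pi_1(s)$ over ABPs. *)

theory Defs
  imports "HOL-Probability.Probability"
begin

text \<open>Model: per time step t a probability space M t of "step realizations" w;
  R t w s a is the realized reward and N t w s a the realized next state of the
  pair (s,a) at step t. Realizations of different state-action pairs at the same step
  are arbitrarily correlated (they are functions of the same w); different steps are
  independent (product measure).\<close>

type_synonym ('s,'a) mpol = "nat \<Rightarrow> 's \<Rightarrow> 'a"

text \<open>Lookahead information: for every deterministic Markov policy, the realized
  trajectory (states at steps h..h+B, rewards at steps h..h+B-1).\<close>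
type_synonym ('s,'a) info = "('s,'a) mpol \<Rightarrow> (nat \<Rightarrow> 's) \<times> (nat \<Rightarrow> real)"

text \<open>An adaptive batching policy: batching horizons and batch policies.\<close>
type_synonym ('s,'a) abp = "(nat \<Rightarrow> 's \<Rightarrow> nat) \<times> (nat \<Rightarrow> 's \<Rightarrow> ('s,'a) info \<Rightarrow> ('s,'a) mpol)"

fun st_off :: "(nat \<Rightarrow> 'w \<Rightarrow> 's \<Rightarrow> 'a \<Rightarrow> 's) \<Rightarrow> (nat \<Rightarrow> 'w) \<Rightarrow> nat \<Rightarrow> 's \<Rightarrow> ('s,'a) mpol \<Rightarrow> nat \<Rightarrow> 's" where
  "st_off N \<omega> h s \<phi> 0 = s"
| "st_off N \<omega> h s \<phi> (Suc k) =
     (let x = st_off N \<omega> h s \<phi> k in N (h + k) (\<omega> (h + k)) x (\<phi> (h + k) x))"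

definition rew_off :: "(nat \<Rightarrow> 'w \<Rightarrow> 's \<Rightarrow> 'a \<Rightarrow> real) \<Rightarrow> (nat \<Rightarrow> 'w \<Rightarrow> 's \<Rightarrow> 'a \<Rightarrow> 's) \<Rightarrow>
    (nat \<Rightarrow> 'w) \<Rightarrow> nat \<Rightarrow> 's \<Rightarrow> ('s,'a) mpol \<Rightarrow> nat \<Rightarrow> real" where
  "rew_off R N \<omega> h s \<phi> k =
     (let x = st_off N \<omega> h s \<phi> k in R (h + k) (\<omega> (h + k)) x (\<phi> (h + k) x))"

text \<open>The B-step lookahead information I_{h,B}(s) under the realization omega
  (omega t = realization of step t).\<close>
definition lookahead :: "(nat \<Rightarrow> 'w \<Rightarrow> 's \<Rightarrow> 'a \<Rightarrow> real) \<Rightarrow> (nat \<Rightarrow> 'w \<Rightarrow> 's \<Rightarrow> 'a \<Rightarrow> 's) \<Rightarrow>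
    (nat \<Rightarrow> 'w) \<Rightarrow> nat \<Rightarrow> nat \<Rightarrow> 's \<Rightarrow> ('s,'a) info" where
  "lookahead R N \<omega> h B s = (\<lambda>\<phi>.
     ((\<lambda>t. if h \<le> t \<and> t \<le> h + B then st_off N \<omega> h s \<phi> (t - h) else undefined),
      (\<lambda>t. if h \<le> t \<and> t < h + B then rew_off R N \<omega> h s \<phi> (t - h) else undefined)))"

definition frakR :: "('s,'a) info \<Rightarrow> ('s,'a) mpol \<Rightarrow> nat \<Rightarrow> real" where
  "frakR I \<phi> t = snd (I \<phi>) t"

definition fraks :: "('s,'a) info \<Rightarrow> ('s,'a) mpol \<Rightarrow> nat \<Rightarrow> 's" where
  "fraks I \<phi> t = fst (I \<phi>) t"

definition Qstar :: "nat \<Rightarrow> nat \<Rightarrow> ('s,'a) info \<Rightarrow> ('s \<Rightarrow> real) \<Rightarrow> real" where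
  "Qstar h B I V = Max (range (\<lambda>\<phi>. (\<Sum>t\<in>{h..<h + B}. frakR I \<phi> t) + V (fraks I \<phi> (h + B))))"

definition lh :: "nat \<Rightarrow> nat \<Rightarrow> nat \<Rightarrow> nat" where
  "lh H L h = min L (H - h + 1)"

text \<open>Realized total reward from step h on, when a batch starts at step h in state s
  (fuel argument bounds the number of batches).\<close>
fun ret :: "(nat \<Rightarrow> 'w \<Rightarrow> 's \<Rightarrow> 'a \<Rightarrow> real) \<Rightarrow> (nat \<Rightarrow> 'w \<Rightarrow> 's \<Rightarrow> 'a \<Rightarrow> 's) \<Rightarrow> nat \<Rightarrow>
    ('s,'a) abp \<Rightarrow> (nat \<Rightarrow> 'w) \<Rightarrow> nat \<Rightarrow> nat \<Rightarrow> 's \<Rightarrow> real" where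
  "ret R N H \<pi> \<omega> 0 h s = 0"
| "ret R N H \<pi> \<omega> (Suc n) h s =
    (if H < h then 0 else
      (let B = fst \<pi> h s; I = lookahead R N \<omega> h B s; \<phi> = snd \<pi> h s I in
        (\<Sum>t\<in>{h..<h + B}. frakR I \<phi> t) + ret R N H \<pi> \<omega> n (h + B) (fraks I \<phi> (h + B))))"

definition Omega :: "(nat \<Rightarrow> 'w measure) \<Rightarrow> nat \<Rightarrow> (nat \<Rightarrow> 'w) measure" where
  "Omega M H = PiM {1..H} M"

definition Vpi :: "(nat \<Rightarrow> 'w \<Rightarrow> 's \<Rightarrow> 'a \<Rightarrow> real) \<Rightarrow> (nat \<Rightarrow> 'w \<Rightarrow> 's \<Rightarrow> 'a \<Rightarrow> 's) \<Rightarrow>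
    (nat \<Rightarrow> 'w measure) \<Rightarrow> nat \<Rightarrow> ('s,'a) abp \<Rightarrow> nat \<Rightarrow> 's \<Rightarrow> real" where
  "Vpi R N M H \<pi> h s = (\<integral>\<omega>. ret R N H \<pi> \<omega> (Suc H) h s \<partial>Omega M H)"

text \<open>Admissible adaptive batching policies: batching horizons in [l_h], and the
  realized return is a random variable (so that its expectation is meaningful).\<close>
definition is_abp :: "(nat \<Rightarrow> 'w \<Rightarrow> 's \<Rightarrow> 'a \<Rightarrow> real) \<Rightarrow> (nat \<Rightarrow> 'w \<Rightarrow> 's \<Rightarrow> 'a \<Rightarrow> 's) \<Rightarrow>
    (nat \<Rightarrow> 'w measure) \<Rightarrow> nat \<Rightarrow> nat \<Rightarrow> ('s,'a) abp \<Rightarrow> bool" where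
  "is_abp R N M H L \<pi> \<longleftrightarrow>
     (\<forall>h\<in>{1..H}. \<forall>s. fst \<pi> h s \<in> {1..lh H L h}) \<and>
     (\<forall>h\<in>{1..H}. \<forall>s. (\<lambda>\<omega>. ret R N H \<pi> \<omega> (Suc H) h s) \<in> borel_measurable (Omega M H))"

definition Vstar :: "(nat \<Rightarrow> 'w \<Rightarrow> 's \<Rightarrow> 'a \<Rightarrow> real) \<Rightarrow> (nat \<Rightarrow> 'w \<Rightarrow> 's \<Rightarrow> 'a \<Rightarrow> 's) \<Rightarrow>
    (nat \<Rightarrow> 'w measure) \<Rightarrow> nat \<Rightarrow> nat \<Rightarrow> nat \<Rightarrow> 's \<Rightarrow> real" where
  "Vstar R N M H L h s = (SUP \<pi>\<in>{\<pi>. is_abp R N M H L \<pi>}. Vpi R N M H \<pi> h s)"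

end

theory Submission
  imports Defs
begin

text \<open>Backward induction over the step at which a batch starts. By Fubini on the product of the
  step spaces, the value of an admissible policy at the start of a batch equals the expectation of
  the realized batch reward plus the policy's own value at the start of the next batch, evaluated
  at the reached state: the lookahead depends only on the steps inside the batch, the continuation
  only on those after it. Replacing the continuation by the optimal value and the batch policy by
  the best one for the revealed information bounds every value by the right-hand side of the
  Bellman equation, and a policy that is greedy both in the batching horizon and in the batch
  policy attains that bound. A greedy policy is admissible because the batch maximiser can be
  chosen measurably, by scanning the finitely many Markov policies restricted to the batch.\<close>

definition fold_argmax :: "('p \<Rightarrow> real) \<Rightarrow> 'p \<Rightarrow> 'p list \<Rightarrow> 'p" where
  "fold_argmax v = foldl (\<lambda>b \<phi>. if v b < v \<phi> then \<phi> else b)"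

lemma fold_argmax_Nil [simp]: "fold_argmax v b [] = b"
  and fold_argmax_Cons [simp]:
    "fold_argmax v b (x # xs) = fold_argmax v (if v b < v x then x else b) xs"
  by (simp_all add: fold_argmax_def)

lemma fold_argmax_ge: "\<phi> \<in> insert b (set xs) \<Longrightarrow> v \<phi> \<le> v (fold_argmax v b xs)"
proof (induction xs arbitrary: b \<phi>)
  case Nil
  then show ?case by simp
next
  case (Cons x xs)
  let ?b' = "if v b < v x then x else b"
  from Cons.prems consider "\<phi> \<in> {b, x}" | "\<phi> \<in> set xs" by auto
  then show ?case
  proof cases
    case 1
    then have "v \<phi> \<le> v ?b'" by auto
    also have "\<dots> \<le> v (fold_argmax v ?b' xs)" by (rule Cons.IH) simp
    finally show ?thesis by simp
  next
    case 2
    then have "v \<phi> \<le> v (fold_argmax v ?b' xs)" by (intro Cons.IH) simp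
    then show ?thesis by simp
  qed
qed

lemma measurable_fold_argmax:
  fixes v :: "'p \<Rightarrow> 'm \<Rightarrow> real"
  assumes F: "countable F" and xs: "set xs \<subseteq> F"
    and v: "\<And>\<phi>. \<phi> \<in> F \<Longrightarrow> v \<phi> \<in> borel_measurable M"
    and b: "b \<in> measurable M (count_space F)"
  shows "(\<lambda>\<omega>. fold_argmax (\<lambda>\<phi>. v \<phi> \<omega>) (b \<omega>) xs) \<in> measurable M (count_space F)"
  using xs b
proof (induction xs arbitrary: b)
  case Nil
  then show ?case by simp
next
  case (Cons x xs)
  have x: "x \<in> F" using Cons.prems by auto
  have "(\<lambda>\<omega>. v (b \<omega>) \<omega>) \<in> borel_measurable M"
    by (rule measurable_compose_countable'[OF _ Cons.prems(2) F]) (rule v)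
  then have "(\<lambda>\<omega>. if v (b \<omega>) \<omega> < v x \<omega> then x else b \<omega>) \<in> measurable M (count_space F)"
    using x v[OF x] Cons.prems(2) by (intro measurable_If) auto
  then show ?case using Cons.IH Cons.prems(1) by simp
qed

lemma (in product_sigma_finite) product_integral_indep_fst:
  fixes f :: "_ \<Rightarrow> real"
  assumes IJ: "I \<inter> J = {}" "finite I" "finite J" and "prob_space (PiM I M)"
    and f: "integrable (PiM (I \<union> J) M) f"
    and indep: "\<And>x x' y. f (merge I J (x, y)) = f (merge I J (x', y))"
  shows "(\<integral>y. f (merge I J (x, y)) \<partial>PiM J M) = integral\<^sup>L (PiM (I \<union> J) M) f"
proof -
  interpret I: prob_space "PiM I M" by fact
  have "integral\<^sup>L (PiM (I \<union> J) M) f = (\<integral>x'. (\<integral>y. f (merge I J (x', y)) \<partial>PiM J M) \<partial>PiM I M)"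
    by (rule product_integral_fold[OF IJ f])
  also have "\<dots> = (\<integral>x'. (\<integral>y. f (merge I J (x, y)) \<partial>PiM J M) \<partial>PiM I M)"
    using indep by (intro Bochner_Integration.integral_cong) auto
  also have "\<dots> = (\<integral>y. f (merge I J (x, y)) \<partial>PiM J M)"
    by (simp add: I.prob_space)
  finally show ?thesis ..
qed

lemma (in product_sigma_finite) product_integral_indep_snd:
  fixes f :: "_ \<Rightarrow> real"
  assumes IJ: "I \<inter> J = {}" "finite I" "finite J" and "prob_space (PiM J M)"
    and f: "integrable (PiM (I \<union> J) M) f"
    and indep: "\<And>x y. f (merge I J (x, y)) = f x"
  shows "integral\<^sup>L (PiM (I \<union> J) M) f = integral\<^sup>L (PiM I M) f"
proof -
  interpret J: prob_space "PiM J M" by fact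
  show ?thesis by (simp add: product_integral_fold[OF IJ f] indep J.prob_space)
qed

section \<open>Realized trajectories and batch values\<close>

lemma st_off_cong:
  assumes "\<And>t. h \<le> t \<Longrightarrow> t < h + k \<Longrightarrow> \<omega> t = \<omega>' t \<and> \<phi> t = \<phi>' t"
  shows "st_off N \<omega> h s \<phi> k = st_off N \<omega>' h s \<phi>' k"
  using assms by (induction k) (auto simp: Let_def)

lemma rew_off_cong:
  assumes "\<And>t. h \<le> t \<Longrightarrow> t \<le> h + k \<Longrightarrow> \<omega> t = \<omega>' t \<and> \<phi> t = \<phi>' t"
  shows "rew_off R N \<omega> h s \<phi> k = rew_off R N \<omega>' h s \<phi>' k"
proof -
  have "st_off N \<omega> h s \<phi> k = st_off N \<omega>' h s \<phi>' k" by (rule st_off_cong) (use assms in auto)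
  then show ?thesis using assms[of "h + k"] by (simp add: rew_off_def Let_def)
qed

lemma lookahead_cong:
  assumes "\<And>t. h \<le> t \<Longrightarrow> t < h + B \<Longrightarrow> \<omega> t = \<omega>' t"
  shows "lookahead R N \<omega> h B s = lookahead R N \<omega>' h B s"
proof -
  have "st_off N \<omega> h s \<phi> k = st_off N \<omega>' h s \<phi> k" if "k \<le> B" for \<phi> k
    by (rule st_off_cong) (use assms that in auto)
  moreover have "rew_off R N \<omega> h s \<phi> k = rew_off R N \<omega>' h s \<phi> k" if "k < B" for \<phi> k
    by (rule rew_off_cong) (use assms that in auto)
  ultimately show ?thesis unfolding lookahead_def by (intro ext prod_eqI) auto
qed

lemma ret_cong:
  "(\<And>t. h \<le> t \<Longrightarrow> \<omega> t = \<omega>' t) \<Longrightarrow> ret R N H \<pi> \<omega> n h s = ret R N H \<pi> \<omega>' n h s"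
proof (induction n arbitrary: h s)
  case 0
  then show ?case by simp
next
  case (Suc n)
  have "lookahead R N \<omega> h B s = lookahead R N \<omega>' h B s" for B
    by (rule lookahead_cong) (use Suc.prems in auto)
  then show ?case using Suc.IH[of "h + fst \<pi> h s"] Suc.prems by (simp add: Let_def)
qed

lemma sum_frakR_lookahead:
  "(\<Sum>t\<in>{h..<h + B}. frakR (lookahead R N \<omega> h B s) \<phi> t) = (\<Sum>k<B. rew_off R N \<omega> h s \<phi> k)"
proof -
  have "(\<Sum>t\<in>{h..<h + B}. frakR (lookahead R N \<omega> h B s) \<phi> t)
      = (\<Sum>t\<in>{h..<h + B}. rew_off R N \<omega> h s \<phi> (t - h))"
    by (rule sum.cong) (auto simp: frakR_def lookahead_def)
  also have "\<dots> = (\<Sum>k<B. rew_off R N \<omega> h s \<phi> k)"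
    by (rule sum.reindex_bij_witness[of _ "\<lambda>k. k + h" "\<lambda>t. t - h"]) auto
  finally show ?thesis .
qed

lemma fraks_lookahead: "fraks (lookahead R N \<omega> h B s) \<phi> (h + B) = st_off N \<omega> h s \<phi> B"
  by (simp add: fraks_def lookahead_def)

definition batch_value ::
    "nat \<Rightarrow> nat \<Rightarrow> ('s,'a) info \<Rightarrow> ('s \<Rightarrow> real) \<Rightarrow> ('s,'a) mpol \<Rightarrow> real" where
  "batch_value h B I V \<phi> = (\<Sum>t\<in>{h..<h + B}. frakR I \<phi> t) + V (fraks I \<phi> (h + B))"

lemma batch_value_lookahead:
  "batch_value h B (lookahead R N \<omega> h B s) V \<phi>
     = (\<Sum>k<B. rew_off R N \<omega> h s \<phi> k) + V (st_off N \<omega> h s \<phi> B)"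
  unfolding batch_value_def by (simp add: sum_frakR_lookahead fraks_lookahead)

lemma batch_value_mono: "V (fraks I \<phi> (h + B)) \<le> V' (fraks I \<phi> (h + B)) \<Longrightarrow>
    batch_value h B I V \<phi> \<le> batch_value h B I V' \<phi>"
  unfolding batch_value_def by simp

definition batch_policies :: "nat \<Rightarrow> nat \<Rightarrow> ('s,'a) mpol set" where
  "batch_policies h B = PiE {h..<h + B} (\<lambda>_. UNIV)"

lemma finite_batch_policies: "finite (batch_policies h B :: ('s::finite,'a::finite) mpol set)"
  unfolding batch_policies_def by (rule finite_PiE) auto

lemma restrict_in_batch_policies: "restrict \<phi> {h..<h + B} \<in> batch_policies h B"
  unfolding batch_policies_def by simp

lemma batch_policies_nonempty: "batch_policies h B \<noteq> {}"
  using restrict_in_batch_policies by blast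

lemma batch_value_restrict:
  "batch_value h B (lookahead R N \<omega> h B s) V (restrict \<phi> {h..<h + B})
     = batch_value h B (lookahead R N \<omega> h B s) V \<phi>"
proof -
  have "st_off N \<omega> h s (restrict \<phi> {h..<h + B}) B = st_off N \<omega> h s \<phi> B"
    by (rule st_off_cong) auto
  moreover have "rew_off R N \<omega> h s (restrict \<phi> {h..<h + B}) k = rew_off R N \<omega> h s \<phi> k"
    if "k < B" for k
    by (rule rew_off_cong) (use that in auto)
  ultimately show ?thesis unfolding batch_value_lookahead by simp
qed

lemma Qstar_lookahead_eq_Max:
  "Qstar h B (lookahead R N \<omega> h B s) V
     = Max (batch_value h B (lookahead R N \<omega> h B s) V ` batch_policies h B)"
proof -
  let ?v = "batch_value h B (lookahead R N \<omega> h B s) V"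
  have "range ?v \<subseteq> ?v ` batch_policies h B"
  proof
    fix r assume "r \<in> range ?v"
    then obtain \<phi> where "r = ?v \<phi>" by blast
    then have "r = ?v (restrict \<phi> {h..<h + B})" by (simp only: batch_value_restrict)
    then show "r \<in> ?v ` batch_policies h B" using restrict_in_batch_policies by blast
  qed
  then have "range ?v = ?v ` batch_policies h B" by blast
  then show ?thesis unfolding Qstar_def batch_value_def[symmetric] by simp
qed

lemma batch_value_le_Qstar:
  fixes R :: "nat \<Rightarrow> 'w \<Rightarrow> 's::finite \<Rightarrow> 'a::finite \<Rightarrow> real"
  shows "batch_value h B (lookahead R N \<omega> h B s) V \<phi> \<le> Qstar h B (lookahead R N \<omega> h B s) V"
proof -
  have "batch_value h B (lookahead R N \<omega> h B s) V \<phi>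
      = batch_value h B (lookahead R N \<omega> h B s) V (restrict \<phi> {h..<h + B})"
    by (rule batch_value_restrict[symmetric])
  also have "\<dots> \<le> Max (batch_value h B (lookahead R N \<omega> h B s) V ` batch_policies h B)"
    by (intro Max_ge finite_imageI finite_batch_policies imageI restrict_in_batch_policies)
  finally show ?thesis unfolding Qstar_lookahead_eq_Max .
qed

lemma Qstar_eq_batch_value_if_maximal:
  fixes R :: "nat \<Rightarrow> 'w \<Rightarrow> 's::finite \<Rightarrow> 'a::finite \<Rightarrow> real"
  assumes "\<And>\<phi>'. batch_value h B (lookahead R N \<omega> h B s) V \<phi>'
              \<le> batch_value h B (lookahead R N \<omega> h B s) V \<phi>"
  shows "Qstar h B (lookahead R N \<omega> h B s) V = batch_value h B (lookahead R N \<omega> h B s) V \<phi>"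
proof (rule antisym)
  show "Qstar h B (lookahead R N \<omega> h B s) V \<le> batch_value h B (lookahead R N \<omega> h B s) V \<phi>"
    unfolding Qstar_lookahead_eq_Max
    using assms batch_policies_nonempty
    by (intro Max.boundedI finite_imageI finite_batch_policies) auto
qed (rule batch_value_le_Qstar)

lemma Qstar_lookahead_attained:
  fixes R :: "nat \<Rightarrow> 'w \<Rightarrow> 's::finite \<Rightarrow> 'a::finite \<Rightarrow> real"
  shows "\<exists>\<phi>. Qstar h B (lookahead R N \<omega> h B s) V = batch_value h B (lookahead R N \<omega> h B s) V \<phi>"
  unfolding Qstar_lookahead_eq_Max
  using Max_in[OF finite_imageI[OF finite_batch_policies]] batch_policies_nonempty by blast

section \<open>The probability space of realizations\<close>

locale batching_mdp =
  fixes M :: "nat \<Rightarrow> 'w measure"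
    and R :: "nat \<Rightarrow> 'w \<Rightarrow> 's::finite \<Rightarrow> 'a::finite \<Rightarrow> real"
    and N :: "nat \<Rightarrow> 'w \<Rightarrow> 's \<Rightarrow> 'a \<Rightarrow> 's"
    and H L :: nat
  assumes lookahead_range_pos: "L \<ge> 1"
    and prob_space_step: "\<forall>t\<in>{1..H}. prob_space (M t)"
    and measurable_R: "\<forall>t\<in>{1..H}. \<forall>s a. (\<lambda>w. R t w s a) \<in> borel_measurable (M t)"
    and measurable_N: "\<forall>t\<in>{1..H}. \<forall>s a. (\<lambda>w. N t w s a) \<in> measurable (M t) (count_space UNIV)"
    and R_range: "\<forall>t\<in>{1..H}. \<forall>w\<in>space (M t). \<forall>s a. 0 \<le> R t w s a \<and> R t w s a \<le> 1"
begin

abbreviation "\<Omega> \<equiv> Omega M H"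

abbreviation "Vs \<equiv> Vstar R N M H L"

text \<open>Padding the steps outside \<open>{1..H}\<close> by the empty space makes the family
  \<open>\<sigma>\<close>-finite everywhere, as the library's Fubini theorems for \<open>PiM\<close> require.\<close>
definition step_space :: "nat \<Rightarrow> 'w measure" where
  "step_space t = (if t \<in> {1..H} then M t else count_space {})"

lemma PiM_step_space: "I \<subseteq> {1..H} \<Longrightarrow> PiM I step_space = PiM I M"
  unfolding step_space_def by (rule PiM_cong) auto

lemma Omega_eq_PiM_step_space: "\<Omega> = PiM {1..H} step_space"
  unfolding Omega_def by (simp add: PiM_step_space)

lemma product_sigma_finite_step_space: "product_sigma_finite step_space"
  unfolding product_sigma_finite_def step_space_def
  using prob_space_step
  by (auto intro: prob_space_imp_sigma_finite sigma_finite_measure_count_space_finite)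

lemma prob_space_PiM_step_space: "I \<subseteq> {1..H} \<Longrightarrow> prob_space (PiM I step_space)"
  by (rule prob_space_PiM) (use prob_space_step in \<open>auto simp: step_space_def\<close>)

lemma prob_space_Omega: "prob_space \<Omega>"
  unfolding Omega_eq_PiM_step_space by (rule prob_space_PiM_step_space) simp

lemma measurable_Omega_component: "t \<in> {1..H} \<Longrightarrow> (\<lambda>\<omega>. \<omega> t) \<in> measurable \<Omega> (M t)"
  unfolding Omega_def by (rule measurable_component_singleton)

lemma space_Omega_component: "\<omega> \<in> space \<Omega> \<Longrightarrow> t \<in> {1..H} \<Longrightarrow> \<omega> t \<in> space (M t)"
  unfolding Omega_def by (auto simp: space_PiM)

lemma measurable_st_off:
  assumes "1 \<le> h" "h + k \<le> Suc H"
  shows "(\<lambda>\<omega>. st_off N \<omega> h s \<phi> k) \<in> measurable \<Omega> (count_space UNIV)"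
  using assms
proof (induction k)
  case 0
  then show ?case by simp
next
  case (Suc k)
  have t: "h + k \<in> {1..H}" using Suc.prems by auto
  have st: "(\<lambda>\<omega>. st_off N \<omega> h s \<phi> k) \<in> measurable \<Omega> (count_space UNIV)"
    using Suc by simp
  have "(\<lambda>\<omega>. (\<lambda>x \<omega>. N (h + k) (\<omega> (h + k)) x (\<phi> (h + k) x)) (st_off N \<omega> h s \<phi> k) \<omega>)
         \<in> measurable \<Omega> (count_space UNIV)"
  proof (rule measurable_compose_countable'[OF _ st])
    fix x
    show "(\<lambda>\<omega>. N (h + k) (\<omega> (h + k)) x (\<phi> (h + k) x)) \<in> measurable \<Omega> (count_space UNIV)"
      using measurable_compose[OF measurable_Omega_component[OF t]] measurable_N t by blast
  qed simp
  then show ?case by (simp add: Let_def)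
qed

lemma measurable_rew_off:
  assumes "1 \<le> h" "h + k \<le> H"
  shows "(\<lambda>\<omega>. rew_off R N \<omega> h s \<phi> k) \<in> borel_measurable \<Omega>"
proof -
  have t: "h + k \<in> {1..H}" using assms by auto
  have st: "(\<lambda>\<omega>. st_off N \<omega> h s \<phi> k) \<in> measurable \<Omega> (count_space UNIV)"
    using measurable_st_off assms by simp
  have "(\<lambda>\<omega>. (\<lambda>x \<omega>. R (h + k) (\<omega> (h + k)) x (\<phi> (h + k) x)) (st_off N \<omega> h s \<phi> k) \<omega>)
         \<in> borel_measurable \<Omega>"
  proof (rule measurable_compose_countable'[OF _ st])
    fix x
    show "(\<lambda>\<omega>. R (h + k) (\<omega> (h + k)) x (\<phi> (h + k) x)) \<in> borel_measurable \<Omega>"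
      using measurable_compose[OF measurable_Omega_component[OF t]] measurable_R t by blast
  qed simp
  then show ?thesis by (simp add: rew_off_def Let_def)
qed

lemma sum_rew_off_range:
  assumes "1 \<le> h" "h + B \<le> Suc H" "\<omega> \<in> space \<Omega>"
  shows "0 \<le> (\<Sum>k<B. rew_off R N \<omega> h s \<phi> k) \<and> (\<Sum>k<B. rew_off R N \<omega> h s \<phi> k) \<le> B"
proof -
  have rew: "0 \<le> rew_off R N \<omega> h s \<phi> k \<and> rew_off R N \<omega> h s \<phi> k \<le> 1" if "k < B" for k
  proof -
    have t: "h + k \<in> {1..H}" using assms that by auto
    show ?thesis
      using R_range t space_Omega_component[OF assms(3) t] by (simp add: rew_off_def Let_def)
  qed
  have "(\<Sum>k<B. rew_off R N \<omega> h s \<phi> k) \<le> (\<Sum>k<B. 1)"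
    using rew by (intro sum_mono) auto
  moreover have "0 \<le> (\<Sum>k<B. rew_off R N \<omega> h s \<phi> k)"
    using rew by (intro sum_nonneg) auto
  ultimately show ?thesis by simp
qed

lemma measurable_batch_value:
  assumes "1 \<le> h" "h + B \<le> Suc H"
  shows "(\<lambda>\<omega>. batch_value h B (lookahead R N \<omega> h B s) V \<phi>) \<in> borel_measurable \<Omega>"
proof -
  have "(\<lambda>\<omega>. \<Sum>k<B. rew_off R N \<omega> h s \<phi> k) \<in> borel_measurable \<Omega>"
    using assms by (intro borel_measurable_sum measurable_rew_off) auto
  moreover have "(\<lambda>\<omega>. V (st_off N \<omega> h s \<phi> B)) \<in> borel_measurable \<Omega>"
    by (rule measurable_compose[OF measurable_st_off[OF assms]]) simp
  ultimately show ?thesis unfolding batch_value_lookahead by simp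
qed

lemma abs_batch_value_le:
  assumes "1 \<le> h" "h + B \<le> Suc H" "\<omega> \<in> space \<Omega>"
  shows "\<bar>batch_value h B (lookahead R N \<omega> h B s) V \<phi>\<bar> \<le> B + (\<Sum>x\<in>UNIV. \<bar>V x\<bar>)"
  using sum_rew_off_range[OF assms, of s \<phi>]
    member_le_sum[of "st_off N \<omega> h s \<phi> B" UNIV "\<lambda>x. \<bar>V x\<bar>"]
  unfolding batch_value_lookahead by auto

lemma integrable_batch_value:
  assumes "1 \<le> h" "h + B \<le> Suc H"
    and "(\<lambda>\<omega>. batch_value h B (lookahead R N \<omega> h B s) V (f \<omega>)) \<in> borel_measurable \<Omega>"
  shows "integrable \<Omega> (\<lambda>\<omega>. batch_value h B (lookahead R N \<omega> h B s) V (f \<omega>))"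
proof -
  interpret prob_space \<Omega> by (rule prob_space_Omega)
  show ?thesis
    using abs_batch_value_le[OF assms(1,2)] assms(3)
    by (intro integrable_const_bound[where B = "B + (\<Sum>x\<in>UNIV. \<bar>V x\<bar>)"] AE_I2) auto
qed

lemma integrable_Qstar:
  assumes "1 \<le> h" "h + B \<le> Suc H"
  shows "integrable \<Omega> (\<lambda>\<omega>. Qstar h B (lookahead R N \<omega> h B s) V)"
proof -
  have "\<forall>\<omega>. \<exists>\<phi>. Qstar h B (lookahead R N \<omega> h B s) V = batch_value h B (lookahead R N \<omega> h B s) V \<phi>"
    using Qstar_lookahead_attained by blast
  from choice[OF this] obtain \<phi>
    where \<phi>: "\<And>\<omega>. Qstar h B (lookahead R N \<omega> h B s) V
                  = batch_value h B (lookahead R N \<omega> h B s) V (\<phi> \<omega>)"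
    by blast
  have "(\<lambda>\<omega>. Qstar h B (lookahead R N \<omega> h B s) V) \<in> borel_measurable \<Omega>"
    unfolding Qstar_lookahead_eq_Max
    by (intro borel_measurable_Max finite_batch_policies measurable_batch_value assms)
  then show ?thesis unfolding \<phi> by (rule integrable_batch_value[OF assms])
qed

section \<open>Returns of admissible policies\<close>

definition valid_horizons :: "('s,'a) abp \<Rightarrow> bool" where
  "valid_horizons \<pi> \<longleftrightarrow> (\<forall>h\<in>{1..H}. \<forall>s. fst \<pi> h s \<in> {1..lh H L h})"

lemma valid_horizonsD:
  assumes "valid_horizons \<pi>" "h \<in> {1..H}"
  shows "fst \<pi> h s \<in> {1..lh H L h}"
    and "1 \<le> fst \<pi> h s" "fst \<pi> h s \<le> L" "h + fst \<pi> h s \<le> Suc H"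
proof -
  show "fst \<pi> h s \<in> {1..lh H L h}"
    using assms unfolding valid_horizons_def by blast
  then show "1 \<le> fst \<pi> h s" "fst \<pi> h s \<le> L" "h + fst \<pi> h s \<le> Suc H"
    using assms(2) unfolding lh_def by auto
qed

lemma is_abp_valid_horizons: "is_abp R N M H L \<pi> \<Longrightarrow> valid_horizons \<pi>"
  unfolding is_abp_def valid_horizons_def by blast

lemma ret_range:
  assumes hv: "valid_horizons \<pi>" and "1 \<le> h" "\<omega> \<in> space \<Omega>"
  shows "0 \<le> ret R N H \<pi> \<omega> n h s \<and> ret R N H \<pi> \<omega> n h s \<le> real n * L"
  using assms(2)
proof (induction n arbitrary: h s)
  case 0
  then show ?case by simp
next
  case (Suc n)
  show ?case
  proof (cases "H < h")
    case True
    then show ?thesis by simp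
  next
    case False
    then have h: "h \<in> {1..H}" using Suc.prems by simp
    let ?B = "fst \<pi> h s"
    let ?\<phi> = "snd \<pi> h s (lookahead R N \<omega> h ?B s)"
    let ?z = "st_off N \<omega> h s ?\<phi> ?B"
    have ret: "ret R N H \<pi> \<omega> (Suc n) h s
        = (\<Sum>k<?B. rew_off R N \<omega> h s ?\<phi> k) + ret R N H \<pi> \<omega> n (h + ?B) ?z"
      using False by (simp add: sum_frakR_lookahead fraks_lookahead Let_def)
    have "0 \<le> (\<Sum>k<?B. rew_off R N \<omega> h s ?\<phi> k) \<and> (\<Sum>k<?B. rew_off R N \<omega> h s ?\<phi> k) \<le> ?B"
      using valid_horizonsD[OF hv h] Suc.prems assms(3) by (intro sum_rew_off_range) auto
    moreover have "0 \<le> ret R N H \<pi> \<omega> n (h + ?B) ?z \<and> ret R N H \<pi> \<omega> n (h + ?B) ?z \<le> real n * L"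
      using Suc.IH Suc.prems by simp
    moreover have "real ?B \<le> real L" using valid_horizonsD[OF hv h] by simp
    moreover have "real (Suc n) * L = L + real n * L" by (simp add: algebra_simps)
    ultimately show ?thesis unfolding ret by linarith
  qed
qed

lemma ret_Suc_fuel:
  assumes hv: "valid_horizons \<pi>" and "1 \<le> h" "H + 1 - h \<le> n"
  shows "ret R N H \<pi> \<omega> (Suc n) h s = ret R N H \<pi> \<omega> n h s"
  using assms(2,3)
proof (induction n arbitrary: h s)
  case 0
  then show ?case by simp
next
  case (Suc n)
  show ?case
  proof (cases "H < h")
    case True
    then show ?thesis by simp
  next
    case False
    then have h: "h \<in> {1..H}" using Suc.prems by simp
    have "ret R N H \<pi> \<omega> (Suc n) (h + fst \<pi> h s) z = ret R N H \<pi> \<omega> n (h + fst \<pi> h s) z" for z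
      using valid_horizonsD[OF hv h, of s] Suc.prems by (intro Suc.IH) auto
    then show ?thesis using False by (simp add: Let_def)
  qed
qed

lemma measurable_ret:
  assumes hv: "valid_horizons \<pi>"
    and batch_measurable: "\<forall>h\<in>{1..H}. \<forall>s. \<exists>F. countable F \<and>
       (\<lambda>\<omega>. snd \<pi> h s (lookahead R N \<omega> h (fst \<pi> h s) s)) \<in> measurable \<Omega> (count_space F)"
    and "1 \<le> h"
  shows "(\<lambda>\<omega>. ret R N H \<pi> \<omega> n h s) \<in> borel_measurable \<Omega>"
  using assms(3)
proof (induction n arbitrary: h s)
  case 0
  then show ?case by simp
next
  case (Suc n)
  show ?case
  proof (cases "H < h")
    case True
    then show ?thesis by simp
  next
    case False
    then have h: "h \<in> {1..H}" using Suc.prems by simp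
    define B where "B = fst \<pi> h s"
    have B: "1 \<le> B" "h + B \<le> Suc H" using valid_horizonsD[OF hv h] B_def by auto
    obtain F where F: "countable F"
      and \<phi>: "(\<lambda>\<omega>. snd \<pi> h s (lookahead R N \<omega> h B s)) \<in> measurable \<Omega> (count_space F)"
      using batch_measurable h unfolding B_def by blast
    have "(\<lambda>\<omega>. batch_value h B (lookahead R N \<omega> h B s) (ret R N H \<pi> \<omega> n (h + B))
                 (snd \<pi> h s (lookahead R N \<omega> h B s))) \<in> borel_measurable \<Omega>"
    proof (rule measurable_compose_countable'[OF _ \<phi> F])
      fix \<phi>
      have "(\<lambda>\<omega>. \<Sum>k<B. rew_off R N \<omega> h s \<phi> k) \<in> borel_measurable \<Omega>"
        using B h by (intro borel_measurable_sum measurable_rew_off) auto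
      moreover have "(\<lambda>\<omega>. (\<lambda>z \<omega>. ret R N H \<pi> \<omega> n (h + B) z) (st_off N \<omega> h s \<phi> B) \<omega>)
          \<in> borel_measurable \<Omega>"
        by (rule measurable_compose_countable'[OF _ measurable_st_off]) (use Suc.IH B h in auto)
      ultimately show "(\<lambda>\<omega>. batch_value h B (lookahead R N \<omega> h B s) (ret R N H \<pi> \<omega> n (h + B)) \<phi>)
          \<in> borel_measurable \<Omega>"
        unfolding batch_value_lookahead by simp
    qed
    moreover have "ret R N H \<pi> \<omega> (Suc n) h s = batch_value h B (lookahead R N \<omega> h B s)
        (ret R N H \<pi> \<omega> n (h + B)) (snd \<pi> h s (lookahead R N \<omega> h B s))" for \<omega>
      using False unfolding B_def by (simp add: batch_value_def Let_def)
    ultimately show ?thesis by simp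
  qed
qed

lemma borel_measurable_ret_abp:
  assumes "is_abp R N M H L \<pi>" "1 \<le> h"
  shows "(\<lambda>\<omega>. ret R N H \<pi> \<omega> (Suc H) h s) \<in> borel_measurable \<Omega>"
proof (cases "h \<le> H")
  case True
  then show ?thesis using assms unfolding is_abp_def by auto
next
  case False
  then show ?thesis by simp
qed

lemma integrable_ret_abp:
  assumes "is_abp R N M H L \<pi>" "1 \<le> h"
  shows "integrable \<Omega> (\<lambda>\<omega>. ret R N H \<pi> \<omega> (Suc H) h s)"
proof -
  interpret prob_space \<Omega> by (rule prob_space_Omega)
  show ?thesis
    using ret_range[OF is_abp_valid_horizons[OF assms(1)] assms(2), where n = "Suc H"]
      borel_measurable_ret_abp[OF assms]
    by (intro integrable_const_bound[where B = "real (Suc H) * L"] AE_I2)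
      (auto simp del: ret.simps)
qed

lemma Vpi_le_Vstar:
  assumes "is_abp R N M H L \<pi>" "1 \<le> h"
  shows "Vpi R N M H \<pi> h s \<le> Vs h s"
  unfolding Vstar_def
proof (rule cSUP_upper)
  interpret prob_space \<Omega> by (rule prob_space_Omega)
  have "Vpi R N M H \<pi>' h s \<le> real (Suc H) * L" if "is_abp R N M H L \<pi>'" for \<pi>'
    unfolding Vpi_def
    using ret_range[OF is_abp_valid_horizons[OF that] assms(2), where n = "Suc H"]
      integrable_ret_abp[OF that assms(2)]
    by (intro integral_le_const AE_I2) (auto simp del: ret.simps)
  then show "bdd_above ((\<lambda>\<pi>. Vpi R N M H \<pi> h s) ` {\<pi>. is_abp R N M H L \<pi>})"
    by (intro bdd_aboveI[where M = "real (Suc H) * L"]) auto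
qed (use assms in simp)

section \<open>Decomposition of the value at a batch start\<close>

lemma integral_ret_after_batch:
  assumes adm: "is_abp R N M H L \<pi>" and h: "h \<in> {1..H}"
    and x: "x \<in> space (PiM {1..<h + fst \<pi> h s} step_space)"
  defines "B \<equiv> fst \<pi> h s"
  shows "(\<integral>y. ret R N H \<pi> (merge {1..<h + B} {h + B..H} (x, y)) (Suc H) h s
            \<partial>PiM {h + B..H} step_space)
       = batch_value h B (lookahead R N x h B s) (Vpi R N M H \<pi> (h + B))
           (snd \<pi> h s (lookahead R N x h B s))"
proof -
  interpret step: product_sigma_finite step_space by (rule product_sigma_finite_step_space)
  define I J where "I = {1..<h + B}" and "J = {h + B..H}"
  have hv: "valid_horizons \<pi>" using adm by (rule is_abp_valid_horizons)
  have B: "1 \<le> B" "h + B \<le> Suc H" using valid_horizonsD[OF hv h] unfolding B_def by auto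
  have IJ: "I \<inter> J = {}" "finite I" "finite J" and UIJ: "I \<union> J = {1..H}"
    unfolding I_def J_def using B h by auto
  interpret J: prob_space "PiM J step_space" using UIJ by (intro prob_space_PiM_step_space) auto
  have x: "x \<in> space (PiM I step_space)" using x unfolding I_def B_def .
  have merge: "(\<lambda>y. merge I J (x, y)) \<in> measurable (PiM J step_space) \<Omega>"
    unfolding Omega_eq_PiM_step_space UIJ[symmetric]
    using measurable_compose[OF measurable_Pair1'[OF x] measurable_merge] by simp
  let ?I = "lookahead R N x h B s"
  let ?\<phi> = "snd \<pi> h s ?I"
  let ?z = "fraks ?I ?\<phi> (h + B)"
  let ?g = "\<lambda>\<omega>. ret R N H \<pi> \<omega> (Suc H) (h + B) ?z"
  have ret_merge: "ret R N H \<pi> (merge I J (x, y)) (Suc H) h s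
      = (\<Sum>t\<in>{h..<h + B}. frakR ?I ?\<phi> t) + ?g (merge I J (x, y))" for y
  proof -
    have "lookahead R N (merge I J (x, y)) h B s = ?I"
      by (rule lookahead_cong) (use h in \<open>auto simp: merge_def I_def\<close>)
    moreover have "ret R N H \<pi> \<omega> H (h + B) z = ret R N H \<pi> \<omega> (Suc H) (h + B) z" for \<omega> z
      using B by (intro ret_Suc_fuel[OF hv, symmetric]) auto
    ultimately show ?thesis using h unfolding B_def by (simp add: Let_def)
  qed
  have "integrable (PiM J step_space) (\<lambda>y. ?g (merge I J (x, y)))"
  proof (rule J.integrable_const_bound[where B = "real (Suc H) * L"])
    show "(\<lambda>y. ?g (merge I J (x, y))) \<in> borel_measurable (PiM J step_space)"
      using B by (intro measurable_compose[OF merge] borel_measurable_ret_abp[OF adm]) auto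
    show "AE y in PiM J step_space. norm (?g (merge I J (x, y))) \<le> real (Suc H) * L"
      using ret_range[OF hv _ measurable_space[OF merge], where n = "Suc H"] B
      by (intro AE_I2) (auto simp del: ret.simps)
  qed
  moreover have "(\<integral>y. ?g (merge I J (x, y)) \<partial>PiM J step_space) = Vpi R N M H \<pi> (h + B) ?z"
    unfolding Vpi_def Omega_eq_PiM_step_space UIJ[symmetric]
  proof (rule step.product_integral_indep_fst[OF IJ])
    show "prob_space (PiM I step_space)" using UIJ by (intro prob_space_PiM_step_space) auto
    show "integrable (PiM (I \<union> J) step_space) ?g"
      using integrable_ret_abp[OF adm] B unfolding Omega_eq_PiM_step_space UIJ by simp
    show "?g (merge I J (x1, y)) = ?g (merge I J (x2, y))" for x1 x2 y
      by (rule ret_cong) (auto simp: merge_def I_def J_def)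
  qed
  ultimately have "(\<integral>y. ret R N H \<pi> (merge I J (x, y)) (Suc H) h s \<partial>PiM J step_space)
      = batch_value h B ?I (Vpi R N M H \<pi> (h + B)) ?\<phi>"
    unfolding ret_merge batch_value_def by (simp add: J.prob_space del: ret.simps)
  then show ?thesis unfolding I_def J_def .
qed

lemma borel_measurable_batch_continuation:
  fixes s :: 's
  assumes adm: "is_abp R N M H L \<pi>" and h: "h \<in> {1..H}"
  defines "B \<equiv> fst \<pi> h s"
  defines "D \<equiv> \<lambda>\<omega>. batch_value h B (lookahead R N \<omega> h B s) (Vpi R N M H \<pi> (h + B))
                      (snd \<pi> h s (lookahead R N \<omega> h B s))"
  shows "D \<in> borel_measurable \<Omega>"
proof -
  interpret step: product_sigma_finite step_space by (rule product_sigma_finite_step_space)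
  define I J where "I = {1..<h + B}" and "J = {h + B..H}"
  have "h + B \<le> Suc H"
    using valid_horizonsD[OF is_abp_valid_horizons[OF adm] h] unfolding B_def by auto
  then have \<Omega>: "\<Omega> = PiM (I \<union> J) step_space"
    unfolding Omega_eq_PiM_step_space I_def J_def using h by (intro arg_cong2[where f = PiM]) auto
  interpret J: prob_space "PiM J step_space"
    unfolding J_def using h by (intro prob_space_PiM_step_space) auto
  text \<open>The batch policy need not be measurable, but \<open>D\<close> is: on the first block of steps it
    is a section integral of the return, which is measurable by admissibility.\<close>
  have "(\<lambda>x. \<integral>y. ret R N H \<pi> (merge I J (x, y)) (Suc H) h s \<partial>PiM J step_space)
      \<in> borel_measurable (PiM I step_space)"
    using measurable_compose[OF measurable_merge borel_measurable_ret_abp[OF adm, unfolded \<Omega>]] h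
    by (intro J.borel_measurable_lebesgue_integral) (simp add: case_prod_beta' del: ret.simps)
  then have D_I: "D \<in> borel_measurable (PiM I step_space)"
    using integral_ret_after_batch[OF adm h] unfolding D_def B_def I_def J_def
    by (rule measurable_cong[THEN iffD1, rotated]) simp
  have "(\<lambda>\<omega>. D (restrict \<omega> I)) \<in> borel_measurable \<Omega>"
    unfolding \<Omega> by (rule measurable_compose[OF measurable_restrict_subset D_I]) auto
  moreover have "D (restrict \<omega> I) = D \<omega>" for \<omega>
  proof -
    have "lookahead R N (restrict \<omega> I) h B s = lookahead R N \<omega> h B s"
      by (rule lookahead_cong) (use h in \<open>auto simp: I_def\<close>)
    then show ?thesis unfolding D_def by simp
  qed
  ultimately show ?thesis by simp
qed

lemma Vpi_batch_decomposition:
  fixes s :: 's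
  assumes adm: "is_abp R N M H L \<pi>" and h: "h \<in> {1..H}"
  defines "B \<equiv> fst \<pi> h s"
  defines "D \<equiv> \<lambda>\<omega>. batch_value h B (lookahead R N \<omega> h B s) (Vpi R N M H \<pi> (h + B))
                      (snd \<pi> h s (lookahead R N \<omega> h B s))"
  shows "integrable \<Omega> D" and "Vpi R N M H \<pi> h s = integral\<^sup>L \<Omega> D"
proof -
  interpret step: product_sigma_finite step_space by (rule product_sigma_finite_step_space)
  define I J where "I = {1..<h + B}" and "J = {h + B..H}"
  have B: "1 \<le> B" "h + B \<le> Suc H"
    using valid_horizonsD[OF is_abp_valid_horizons[OF adm] h] unfolding B_def by auto
  have IJ: "I \<inter> J = {}" "finite I" "finite J" and UIJ: "I \<union> J = {1..H}"
    unfolding I_def J_def using B h by auto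
  have \<Omega>: "\<Omega> = PiM (I \<union> J) step_space" unfolding UIJ by (rule Omega_eq_PiM_step_space)
  show D_integrable: "integrable \<Omega> D"
    using borel_measurable_batch_continuation[OF adm h] h B
    unfolding D_def B_def by (intro integrable_batch_value) auto
  have "Vpi R N M H \<pi> h s
      = (\<integral>x. (\<integral>y. ret R N H \<pi> (merge I J (x, y)) (Suc H) h s \<partial>PiM J step_space)
           \<partial>PiM I step_space)"
    using integrable_ret_abp[OF adm] h unfolding Vpi_def \<Omega>
    by (intro step.product_integral_fold[OF IJ]) (simp del: ret.simps)
  also have "\<dots> = integral\<^sup>L (PiM I step_space) D"
    using integral_ret_after_batch[OF adm h] unfolding D_def B_def I_def J_def
    by (intro Bochner_Integration.integral_cong) simp_all
  also have "\<dots> = integral\<^sup>L \<Omega> D"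
    unfolding \<Omega>
  proof (rule step.product_integral_indep_snd[OF IJ, symmetric])
    show "prob_space (PiM J step_space)"
      unfolding J_def using h by (intro prob_space_PiM_step_space) auto
    show "integrable (PiM (I \<union> J) step_space) D" using D_integrable unfolding \<Omega> .
    show "D (merge I J (x, y)) = D x" for x y
    proof -
      have "lookahead R N (merge I J (x, y)) h B s = lookahead R N x h B s"
        by (rule lookahead_cong) (use h in \<open>auto simp: merge_def I_def\<close>)
      then show ?thesis unfolding D_def by simp
    qed
  qed
  finally show "Vpi R N M H \<pi> h s = integral\<^sup>L \<Omega> D" .
qed

section \<open>Bellman equation and greedy policies\<close>

definition Q_batch :: "nat \<Rightarrow> nat \<Rightarrow> 's \<Rightarrow> real" where
  "Q_batch h B s = (\<integral>\<omega>. Qstar h B (lookahead R N \<omega> h B s) (Vs (h + B)) \<partial>\<Omega>)"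

definition bellman :: "nat \<Rightarrow> 's \<Rightarrow> real" where
  "bellman h s = Max ((\<lambda>B. Q_batch h B s) ` {1..lh H L h})"

definition greedy :: "('s,'a) abp \<Rightarrow> bool" where
  "greedy \<pi> \<longleftrightarrow>
     (\<forall>h\<in>{1..H}. \<forall>s. \<forall>B\<in>{1..lh H L h}. Q_batch h B s \<le> Q_batch h (fst \<pi> h s) s) \<and>
     (\<forall>h\<in>{1..H}. \<forall>s. \<forall>\<omega>\<in>space \<Omega>. \<forall>\<phi>'.
        batch_value h (fst \<pi> h s) (lookahead R N \<omega> h (fst \<pi> h s) s) (Vs (h + fst \<pi> h s)) \<phi>'
        \<le> batch_value h (fst \<pi> h s) (lookahead R N \<omega> h (fst \<pi> h s) s) (Vs (h + fst \<pi> h s))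
             (snd \<pi> h s (lookahead R N \<omega> h (fst \<pi> h s) s)))"

lemma greedyD:
  assumes "greedy \<pi>" "h \<in> {1..H}"
  shows "B \<in> {1..lh H L h} \<Longrightarrow> Q_batch h B s \<le> Q_batch h (fst \<pi> h s) s"
    and "\<omega> \<in> space \<Omega> \<Longrightarrow>
      batch_value h (fst \<pi> h s) (lookahead R N \<omega> h (fst \<pi> h s) s) (Vs (h + fst \<pi> h s)) \<phi>'
      \<le> batch_value h (fst \<pi> h s) (lookahead R N \<omega> h (fst \<pi> h s) s) (Vs (h + fst \<pi> h s))
           (snd \<pi> h s (lookahead R N \<omega> h (fst \<pi> h s) s))"
  using assms unfolding greedy_def by blast+

lemma Q_batch_le_bellman: "B \<in> {1..lh H L h} \<Longrightarrow> Q_batch h B s \<le> bellman h s"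
  unfolding bellman_def by (rule Max_ge) auto

lemma bellman_attained:
  assumes "h \<le> H"
  shows "\<exists>B\<in>{1..lh H L h}. Q_batch h B s = bellman h s"
proof -
  have "{1..lh H L h} \<noteq> {}" using assms lookahead_range_pos by (simp add: lh_def)
  then have "bellman h s \<in> (\<lambda>B. Q_batch h B s) ` {1..lh H L h}"
    unfolding bellman_def by (intro Max_in) auto
  then obtain B where "B \<in> {1..lh H L h}" "bellman h s = Q_batch h B s" by blast
  then show ?thesis by auto
qed

lemma Vpi_le_bellman:
  assumes adm: "is_abp R N M H L \<pi>" and h: "h \<in> {1..H}"
  shows "Vpi R N M H \<pi> h s \<le> bellman h s"
proof -
  define B where "B = fst \<pi> h s"
  let ?I = "\<lambda>\<omega>. lookahead R N \<omega> h B s"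
  have B: "B \<in> {1..lh H L h}" "h + B \<le> Suc H"
    using valid_horizonsD[OF is_abp_valid_horizons[OF adm] h] unfolding B_def by auto
  have "Vpi R N M H \<pi> h s
      = (\<integral>\<omega>. batch_value h B (?I \<omega>) (Vpi R N M H \<pi> (h + B)) (snd \<pi> h s (?I \<omega>)) \<partial>\<Omega>)"
    unfolding B_def by (rule Vpi_batch_decomposition[OF adm h])
  also have "\<dots> \<le> (\<integral>\<omega>. Qstar h B (?I \<omega>) (Vs (h + B)) \<partial>\<Omega>)"
  proof (rule integral_mono)
    show "integrable \<Omega> (\<lambda>\<omega>. batch_value h B (?I \<omega>) (Vpi R N M H \<pi> (h + B)) (snd \<pi> h s (?I \<omega>)))"
      unfolding B_def by (rule Vpi_batch_decomposition[OF adm h])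
    show "integrable \<Omega> (\<lambda>\<omega>. Qstar h B (?I \<omega>) (Vs (h + B)))"
      using h B by (intro integrable_Qstar) auto
    fix \<omega>
    have "batch_value h B (?I \<omega>) (Vpi R N M H \<pi> (h + B)) (snd \<pi> h s (?I \<omega>))
        \<le> batch_value h B (?I \<omega>) (Vs (h + B)) (snd \<pi> h s (?I \<omega>))"
      by (rule batch_value_mono, rule Vpi_le_Vstar[OF adm]) (use h in simp)
    also have "\<dots> \<le> Qstar h B (?I \<omega>) (Vs (h + B))"
      by (rule batch_value_le_Qstar)
    finally show "batch_value h B (?I \<omega>) (Vpi R N M H \<pi> (h + B)) (snd \<pi> h s (?I \<omega>))
        \<le> Qstar h B (?I \<omega>) (Vs (h + B))" .
  qed
  also have "\<dots> = Q_batch h B s" unfolding Q_batch_def ..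
  also have "\<dots> \<le> bellman h s" using B by (intro Q_batch_le_bellman) auto
  finally show ?thesis .
qed

lemma Vpi_eq_bellman_if_greedy:
  assumes adm: "is_abp R N M H L \<pi>" and gr: "greedy \<pi>" and h: "h \<in> {1..H}"
    and continuation: "Vpi R N M H \<pi> (h + fst \<pi> h s) = Vs (h + fst \<pi> h s)"
  shows "Vpi R N M H \<pi> h s = bellman h s"
proof -
  define B where "B = fst \<pi> h s"
  let ?I = "\<lambda>\<omega>. lookahead R N \<omega> h B s"
  have B: "B \<in> {1..lh H L h}"
    using valid_horizonsD[OF is_abp_valid_horizons[OF adm] h] unfolding B_def by auto
  have "Vpi R N M H \<pi> h s
      = (\<integral>\<omega>. batch_value h B (?I \<omega>) (Vpi R N M H \<pi> (h + B)) (snd \<pi> h s (?I \<omega>)) \<partial>\<Omega>)"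
    unfolding B_def by (rule Vpi_batch_decomposition[OF adm h])
  also have "\<dots> = Q_batch h B s"
    unfolding Q_batch_def continuation[folded B_def]
  proof (rule Bochner_Integration.integral_cong[OF refl])
    fix \<omega> assume "\<omega> \<in> space \<Omega>"
    then show "batch_value h B (?I \<omega>) (Vs (h + B)) (snd \<pi> h s (?I \<omega>))
        = Qstar h B (?I \<omega>) (Vs (h + B))"
      using greedyD(2)[OF gr h] unfolding B_def
      by (intro Qstar_eq_batch_value_if_maximal[symmetric])
  qed
  also have "\<dots> = bellman h s"
  proof (rule antisym)
    show "Q_batch h B s \<le> bellman h s" using B by (rule Q_batch_le_bellman)
    obtain B' where "B' \<in> {1..lh H L h}" "Q_batch h B' s = bellman h s"
      using bellman_attained[of h s] h by auto
    then show "bellman h s \<le> Q_batch h B s" using greedyD(1)[OF gr h] unfolding B_def by metis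
  qed
  finally show ?thesis .
qed

definition greedy_horizon :: "nat \<Rightarrow> 's \<Rightarrow> nat" where
  "greedy_horizon h s = (SOME B. B \<in> {1..lh H L h} \<and> Q_batch h B s = bellman h s)"

lemma greedy_horizon:
  assumes "h \<le> H"
  shows "greedy_horizon h s \<in> {1..lh H L h}" and "Q_batch h (greedy_horizon h s) s = bellman h s"
  using someI_ex[OF bellman_attained[OF assms, of s, unfolded Bex_def]]
  unfolding greedy_horizon_def by auto

definition batch_policy_list :: "nat \<Rightarrow> nat \<Rightarrow> ('s,'a) mpol list" where
  "batch_policy_list h B = (SOME xs. set xs = batch_policies h B)"

lemma set_batch_policy_list: "set (batch_policy_list h B) = batch_policies h B"
  unfolding batch_policy_list_def by (rule someI_ex) (rule finite_list[OF finite_batch_policies])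

definition greedy_batch_policy :: "nat \<Rightarrow> 's \<Rightarrow> ('s,'a) info \<Rightarrow> ('s,'a) mpol" where
  "greedy_batch_policy h s I =
     (let B = greedy_horizon h s; xs = batch_policy_list h B in
       fold_argmax (batch_value h B I (Vs (h + B))) (hd xs) xs)"

definition greedy_policy :: "('s,'a) abp" where
  "greedy_policy = (greedy_horizon, greedy_batch_policy)"

lemma greedy_policy_greedy: "greedy greedy_policy"
  unfolding greedy_def
proof (intro conjI ballI allI)
  fix h s assume h: "h \<in> {1..H}"
  then show "Q_batch h B s \<le> Q_batch h (fst greedy_policy h s) s" if "B \<in> {1..lh H L h}" for B
    using Q_batch_le_bellman[OF that] greedy_horizon(2)[of h s] by (simp add: greedy_policy_def)
  fix \<omega> \<phi>'
  define B where "B = greedy_horizon h s"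
  define xs where "xs = batch_policy_list h B"
  let ?v = "batch_value h B (lookahead R N \<omega> h B s) (Vs (h + B))"
  have "?v \<phi>' = ?v (restrict \<phi>' {h..<h + B})"
    by (rule batch_value_restrict[symmetric])
  also have "\<dots> \<le> ?v (fold_argmax ?v (hd xs) xs)"
    by (rule fold_argmax_ge[where v = ?v])
      (simp add: xs_def set_batch_policy_list restrict_in_batch_policies)
  finally show "batch_value h (fst greedy_policy h s) (lookahead R N \<omega> h (fst greedy_policy h s) s)
        (Vs (h + fst greedy_policy h s)) \<phi>'
      \<le> batch_value h (fst greedy_policy h s) (lookahead R N \<omega> h (fst greedy_policy h s) s)
        (Vs (h + fst greedy_policy h s))
        (snd greedy_policy h s (lookahead R N \<omega> h (fst greedy_policy h s) s))"
    unfolding greedy_policy_def greedy_batch_policy_def B_def xs_def by (simp add: Let_def)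
qed

lemma greedy_policy_admissible: "is_abp R N M H L greedy_policy"
proof -
  have hv: "valid_horizons greedy_policy"
    unfolding valid_horizons_def greedy_policy_def using greedy_horizon(1) by simp
  have "\<exists>F. countable F \<and>
      (\<lambda>\<omega>. snd greedy_policy h s (lookahead R N \<omega> h (fst greedy_policy h s) s))
        \<in> measurable \<Omega> (count_space F)" if h: "h \<in> {1..H}" for h s
  proof (intro exI conjI)
    define B where "B = greedy_horizon h s"
    define xs where "xs = batch_policy_list h B"
    have B: "h + B \<le> Suc H"
      using valid_horizonsD[OF hv h, of s] unfolding B_def greedy_policy_def by simp
    have "xs \<noteq> []"
      using set_batch_policy_list batch_policies_nonempty unfolding xs_def by (metis set_empty)
    then have "hd xs \<in> batch_policies h B"
      using set_batch_policy_list unfolding xs_def by (metis hd_in_set)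
    then have "(\<lambda>\<omega>. fold_argmax (\<lambda>\<phi>. batch_value h B (lookahead R N \<omega> h B s) (Vs (h + B)) \<phi>)
                   (hd xs) xs)
        \<in> measurable \<Omega> (count_space (batch_policies h B))"
      using h B set_batch_policy_list unfolding xs_def
      by (intro measurable_fold_argmax countable_finite finite_batch_policies
          measurable_batch_value) auto
    then show "(\<lambda>\<omega>. snd greedy_policy h s (lookahead R N \<omega> h (fst greedy_policy h s) s))
        \<in> measurable \<Omega> (count_space (batch_policies h B))"
      unfolding greedy_policy_def greedy_batch_policy_def B_def xs_def by (simp add: Let_def)
  qed (rule countable_finite[OF finite_batch_policies])
  then have "(\<lambda>\<omega>. ret R N H greedy_policy \<omega> (Suc H) h s) \<in> borel_measurable \<Omega>"
    if "h \<in> {1..H}" for h s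
    using that by (intro measurable_ret[OF hv]) auto
  then show ?thesis using hv unfolding is_abp_def valid_horizons_def by blast
qed

lemma Vpi_Suc_H: "Vpi R N M H \<pi> (Suc H) s = 0"
  unfolding Vpi_def by simp

lemma admissible_policies_nonempty: "{\<pi>. is_abp R N M H L \<pi>} \<noteq> {}"
  using greedy_policy_admissible by blast

lemma Vstar_Suc_H: "Vs (Suc H) s = 0"
  unfolding Vstar_def Vpi_Suc_H by (rule cSUP_const[OF admissible_policies_nonempty])

lemma Vstar_le_bellman: "h \<in> {1..H} \<Longrightarrow> Vs h s \<le> bellman h s"
  unfolding Vstar_def using Vpi_le_bellman
  by (intro cSUP_least[OF admissible_policies_nonempty]) blast

lemma greedy_policy_optimal:
  assumes adm: "is_abp R N M H L \<pi>" and gr: "greedy \<pi>" and "h \<in> {1..Suc H}"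
  shows "Vpi R N M H \<pi> h s = Vs h s \<and> (h \<le> H \<longrightarrow> Vs h s = bellman h s)"
  using assms(3)
proof (induction "Suc H - h" arbitrary: h s rule: less_induct)
  case less
  show ?case
  proof (cases "h = Suc H")
    case True
    then show ?thesis by (simp add: Vpi_Suc_H Vstar_Suc_H)
  next
    case False
    then have h: "h \<in> {1..H}" using less.prems by auto
    let ?h' = "h + fst \<pi> h s"
    have "1 \<le> fst \<pi> h s" "?h' \<le> Suc H"
      using valid_horizonsD[OF is_abp_valid_horizons[OF adm] h] by auto
    then have "Vpi R N M H \<pi> ?h' z = Vs ?h' z" for z
      using less.hyps[of ?h' z] h by simp
    then have "Vpi R N M H \<pi> h s = bellman h s"
      by (intro Vpi_eq_bellman_if_greedy[OF adm gr h] ext)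
    moreover have "Vpi R N M H \<pi> h s \<le> Vs h s" using adm h by (intro Vpi_le_Vstar) auto
    moreover have "Vs h s \<le> bellman h s" using h by (rule Vstar_le_bellman)
    ultimately show ?thesis by simp
  qed
qed

end

theorem proposition1:
  fixes M :: "nat \<Rightarrow> 'w measure"
    and R :: "nat \<Rightarrow> 'w \<Rightarrow> 's::finite \<Rightarrow> 'a::finite \<Rightarrow> real"
    and N :: "nat \<Rightarrow> 'w \<Rightarrow> 's \<Rightarrow> 'a \<Rightarrow> 's"
    and H L :: nat
  assumes "L \<ge> 1"
    and "\<forall>t\<in>{1..H}. prob_space (M t)"
    and "\<forall>t\<in>{1..H}. \<forall>s a. (\<lambda>w. R t w s a) \<in> borel_measurable (M t)"
    and "\<forall>t\<in>{1..H}. \<forall>s a. (\<lambda>w. N t w s a) \<in> measurable (M t) (count_space UNIV)"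
    and "\<forall>t\<in>{1..H}. \<forall>w\<in>space (M t). \<forall>s a. 0 \<le> R t w s a \<and> R t w s a \<le> 1"
  shows
    "(\<exists>\<pi>. is_abp R N M H L \<pi> \<and>
        (\<forall>\<pi>'. is_abp R N M H L \<pi>' \<longrightarrow> (\<forall>s. Vpi R N M H \<pi>' 1 s \<le> Vpi R N M H \<pi> 1 s)))
     \<and> (\<forall>s. Vstar R N M H L (Suc H) s = 0)
     \<and> (\<forall>h\<in>{1..H}. \<forall>s. Vstar R N M H L h s =
          Max ((\<lambda>B. \<integral>\<omega>. Qstar h B (lookahead R N \<omega> h B s) (Vstar R N M H L (h + B)) \<partial>Omega M H)
               ` {1..lh H L h}))
     \<and> (\<exists>\<pi>. is_abp R N M H L \<pi>)
     \<and> (\<forall>\<pi>. is_abp R N M H L \<pi>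
          \<and> (\<forall>h\<in>{1..H}. \<forall>s. \<forall>B\<in>{1..lh H L h}.
               (\<integral>\<omega>. Qstar h B (lookahead R N \<omega> h B s) (Vstar R N M H L (h + B)) \<partial>Omega M H)
               \<le> (\<integral>\<omega>. Qstar h (fst \<pi> h s) (lookahead R N \<omega> h (fst \<pi> h s) s)
                       (Vstar R N M H L (h + fst \<pi> h s)) \<partial>Omega M H))
          \<and> (\<forall>h\<in>{1..H}. \<forall>s. \<forall>\<omega>\<in>space (Omega M H). \<forall>\<phi>'.
               (let B = fst \<pi> h s; I = lookahead R N \<omega> h B s; \<phi> = snd \<pi> h s I in
                 (\<Sum>t\<in>{h..<h + B}. frakR I \<phi>' t) + Vstar R N M H L (h + B) (fraks I \<phi>' (h + B))
                 \<le> (\<Sum>t\<in>{h..<h + B}. frakR I \<phi> t) + Vstar R N M H L (h + B) (fraks I \<phi> (h + B))))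
          \<longrightarrow> (\<forall>h\<in>{1..Suc H}. \<forall>s. Vpi R N M H \<pi> h s = Vstar R N M H L h s))"
proof -
  interpret batching_mdp M R N H L using assms by unfold_locales
  note optimal = greedy_policy_optimal[OF greedy_policy_admissible greedy_policy_greedy]
  have "Vpi R N M H \<pi>' 1 s \<le> Vpi R N M H greedy_policy 1 s" if "is_abp R N M H L \<pi>'" for \<pi>' s
    using Vpi_le_Vstar[OF that, of 1 s] optimal[of 1 s] by simp
  moreover have "\<forall>h\<in>{1..H}. \<forall>s. Vs h s = bellman h s" using optimal by simp
  moreover have "\<forall>\<pi>. is_abp R N M H L \<pi> \<and> greedy \<pi> \<longrightarrow>
      (\<forall>h\<in>{1..Suc H}. \<forall>s. Vpi R N M H \<pi> h s = Vs h s)"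
    using greedy_policy_optimal by blast
  ultimately show ?thesis
    using greedy_policy_admissible Vstar_Suc_H
    unfolding bellman_def greedy_def Q_batch_def batch_value_def Let_def by (intro conjI) blast+
qed
end
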